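(* There exists an absolute constant $C>0$ such that if $n\ge1$, $0<q\le 1-\frac2n$ and $\pi\sim\mu_{n,q}$, then $$\mathbb{P}(\mathrm{LIS}(\pi)\ge L)\le\left(\frac{C(1-q)n^2}{L^2}\right)^L$$ for all integers $L\ge Cn\sqrt{1-q}$.
   Context: For $q>0$ and $n\ge1$, $\mu_{n,q}(\pi)=q^{\mathrm{inv}(\pi)}/Z_{n,q}$ on $S_n$, with $\mathrm{inv}(\pi)$ the number of pairs $i<j$ with $\pi(i)>\pi(j)$ and $Z_{n,q}$ a normalizing constant. $\mathrm{LIS}(\pi)$ is the length of a longest increasing subsequence of $\pi$. *)

theory Defs
  imports "HOL-Analysis.Analysis" "HOL-Combinatorics.Permutations"
begin

definition perms :: "nat \<Rightarrow> (nat \<Rightarrow> nat) set" where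
  "perms n = {p. p permutes {1..n}}"

definition inversions :: "nat \<Rightarrow> (nat \<Rightarrow> nat) \<Rightarrow> nat" where
  "inversions n p = card {(i, j). i \<in> {1..n} \<and> j \<in> {1..n} \<and> i < j \<and> p i > p j}"

definition LIS :: "nat \<Rightarrow> (nat \<Rightarrow> nat) \<Rightarrow> nat" where
  "LIS n p = Max (card ` {S. S \<subseteq> {1..n} \<and> (\<forall>i\<in>S. \<forall>j\<in>S. i < j \<longrightarrow> p i < p j)})"

definition mallows_Z :: "nat \<Rightarrow> real \<Rightarrow> real" where
  "mallows_Z n q = (\<Sum>p\<in>perms n. q ^ inversions n p)"

definition mallows_prob :: "nat \<Rightarrow> real \<Rightarrow> ((nat \<Rightarrow> nat) \<Rightarrow> bool) \<Rightarrow> real" where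
  "mallows_prob n q P = (\<Sum>p\<in>{p \<in> perms n. P p}. q ^ inversions n p) / mallows_Z n q"

end

theory Submission imports Defs begin

text \<open>
  Fix a set \<open>S\<close> of \<open>L\<close> positions on which \<open>\<pi>\<close> increases and cut its sorted elements into
  consecutive blocks of \<open>m\<close> elements (the last one of fewer than \<open>2m\<close>). Rearranging the values of
  \<open>\<pi>\<close> inside a block \<open>B\<close> contained in an interval \<open>J\<close> only affects pairs meeting \<open>B\<close> inside \<open>J\<close>,
  so it creates at most \<open>2|B||J|\<close> new inversions, and distinct pairs (increasing \<open>\<pi>\<close>, rearrangement)
  give distinct permutations. Hence the Mallows weight of \<open>{\<pi> increasing on S}\<close> times
  \<open>\<Prod> |B|! q^(2|B||J|) \<ge> (m/e)^L q^(4mn)\<close> is at most the partition function. A union bound over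
  the \<open>(n choose L) \<le> (en/L)^L\<close> sets \<open>S\<close> and the choice \<open>m \<approx> L/((1-q)n)\<close>, for which
  \<open>q^(-4mn) \<le> e^(8L)\<close>, give the bound with any \<open>C \<ge> 2e\<^sup>1\<^sup>0\<close> when \<open>L \<le> n\<close>: then
  \<open>L \<ge> Cn\<surd>(1-q)\<close> forces \<open>1 - q \<le> 1/2\<close> and \<open>(1-q)n \<le> L\<close>. For \<open>L > n\<close> the event is empty.
\<close>

lemma strict_mono_on_eq_if_image_eq:
  fixes f g :: "'a::wellorder \<Rightarrow> 'b::linorder"
  assumes f: "strict_mono_on B f" and g: "strict_mono_on B g" and image: "f ` B = g ` B"
    and "i \<in> B"
  shows "f i = g i"
proof -
  have not_less:
    "\<not> f' i < g' i" if f': "strict_mono_on B f'" and g': "strict_mono_on B g'"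
      and "f' ` B \<subseteq> g' ` B" and "i \<in> B" and below: "\<forall>j\<in>B. j < i \<longrightarrow> f' j = g' j"
    for f' g' :: "'a \<Rightarrow> 'b" and i
  proof
    assume less: "f' i < g' i"
    obtain j where j: "j \<in> B" "f' i = g' j" using \<open>f' ` B \<subseteq> g' ` B\<close> \<open>i \<in> B\<close> by blast
    consider "j < i" | "j = i" | "i < j" by (rule linorder_cases)
    then show False
    proof cases
      case 1
      then show False using j below strict_mono_onD[OF f' j(1) \<open>i \<in> B\<close>] by simp
    next
      case 2
      then show False using j less by simp
    next
      case 3
      then show False using j less strict_mono_onD[OF g' \<open>i \<in> B\<close> j(1)] by simp
    qed
  qed
  show ?thesis using \<open>i \<in> B\<close>
  proof (induction i rule: less_induct)
    case (less i)
    then show ?case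
      using not_less[OF f g _ less.prems] not_less[OF g f _ less.prems] image by force
  qed
qed

lemma inj_on_comp_permutes:
  fixes B :: "'a::wellorder set"
  shows "inj_on (\<lambda>(p, t). p \<circ> t)
    ({p :: 'a \<Rightarrow> 'b::linorder. inj p \<and> strict_mono_on B p} \<times> {t. t permutes B})"
proof (rule inj_onI, clarsimp)
  fix p p' :: "'a \<Rightarrow> 'b" and t t' :: "'a \<Rightarrow> 'a"
  assume p: "inj p" "strict_mono_on B p" and p': "strict_mono_on B p'"
    and t: "t permutes B" and t': "t' permutes B" and eq: "p \<circ> t = p' \<circ> t'"
  have "p ` B = p ` t ` B" using permutes_image[OF t] by simp
  also have "\<dots> = p' ` t' ` B" using eq by (simp add: image_comp)
  also have "\<dots> = p' ` B" using permutes_image[OF t'] by simp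
  finally have "p ` B = p' ` B" .
  then have "p x = p' x" for x
    using strict_mono_on_eq_if_image_eq[OF p(2) p'] fun_cong[OF eq, of x] t t'
    by (cases "x \<in> B") (auto simp: permutes_not_in)
  then have "p = p'" by blast
  moreover have "t = t'"
  proof
    fix x show "t x = t' x" using fun_cong[OF eq, of x] \<open>p = p'\<close> p(1) by (simp add: inj_eq)
  qed
  ultimately show "p = p' \<and> t = t'" ..
qed

lemma sum_UN_le:
  fixes f :: "'b \<Rightarrow> 'c::ordered_ab_group_add"
  assumes "finite I" "\<And>i. i \<in> I \<Longrightarrow> finite (A i)" "\<And>x. 0 \<le> f x"
  shows "sum f (\<Union>i\<in>I. A i) \<le> (\<Sum>i\<in>I. sum f (A i))"
  using assms(1,2)
proof (induction I rule: finite_induct)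
  case (insert i I)
  have "sum f (A i \<union> (\<Union>j\<in>I. A j)) \<le> sum f (A i) + sum f (\<Union>j\<in>I. A j)"
    using insert.prems assms(3) insert.hyps(1) by (simp add: sum_Un sum_nonneg)
  also have "\<dots> \<le> sum f (A i) + (\<Sum>j\<in>I. sum f (A j))"
    using insert.IH insert.prems by simp
  finally show ?case using insert.hyps by simp
qed simp

lemma pow_div_exp_le_fact:
  assumes "m \<le> k"
  shows "(real m / exp 1) ^ k \<le> fact k"
proof -
  have "(\<lambda>j. real k ^ j / fact j) sums exp (real k)"
    using exp_converges[of "real k"] by (simp add: divide_inverse mult.commute)
  then have "real k ^ k / fact k \<le> exp (real k)"
    using sum_le_suminf[of "\<lambda>j. real k ^ j / fact j" "{k}"] by (force simp: sums_iff)
  also have "exp (real k) = exp 1 ^ k" by (simp add: exp_of_nat_mult[symmetric])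
  finally have "(real k / exp 1) ^ k \<le> fact k" by (simp add: power_divide field_simps)
  moreover have "(real m / exp 1) ^ k \<le> (real k / exp 1) ^ k"
    using assms by (intro power_mono divide_right_mono) auto
  ultimately show ?thesis by linarith
qed

lemma binomial_le_exp_pow: "real (n choose k) \<le> (exp 1 * real n / real k) ^ k"
proof (cases "k = 0")
  case False
  have "real (n choose k) * (real k / exp 1) ^ k \<le> real (n choose k) * fact k"
    using pow_div_exp_le_fact[OF order.refl] by (rule mult_left_mono) simp
  also have "\<dots> \<le> real n ^ k"
    using binomial_fact_pow[of n k] by (metis of_nat_fact of_nat_le_iff of_nat_mult of_nat_power)
  finally show ?thesis
    using False by (simp add: power_divide field_simps)
qed simp

lemma exp_neg_two_mult_le:
  fixes x :: real
  assumes "0 \<le> x" "x \<le> 1/2"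
  shows "exp (-2 * x) \<le> 1 - x"
proof -
  have "-2 * x \<le> - x - 2 * x\<^sup>2"
    using mult_left_mono[of "2 * x" 1 x] assms by (simp add: power2_eq_square)
  also have "\<dots> \<le> ln (1 - x)"
    by (rule ln_one_minus_pos_lower_bound) (use assms in auto)
  finally have "exp (-2 * x) \<le> exp (ln (1 - x))" by simp
  then show ?thesis using assms by simp
qed

lemma obtain_block_size:
  fixes x :: real and L :: nat
  assumes "1 \<le> x" "x \<le> real L"
  obtains m :: nat where "1 \<le> m" "m \<le> L" "real m * x \<le> real L" "real L \<le> 2 * real m * x"
proof
  define y where "y = real L / x"
  have "1 \<le> y" "y \<le> real L" unfolding y_def using assms by (auto simp: field_simps)
  show "1 \<le> nat \<lfloor>y\<rfloor>" "nat \<lfloor>y\<rfloor> \<le> L"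
    using \<open>1 \<le> y\<close> \<open>y \<le> real L\<close> by linarith+
  have "1 \<le> \<lfloor>y\<rfloor>" using \<open>1 \<le> y\<close> by simp
  then have "real (nat \<lfloor>y\<rfloor>) \<le> y" "y \<le> 2 * real (nat \<lfloor>y\<rfloor>)"
    by linarith+
  moreover have "y * x = real L" unfolding y_def using assms by simp
  ultimately show "real (nat \<lfloor>y\<rfloor>) * x \<le> real L" "real L \<le> 2 * real (nat \<lfloor>y\<rfloor>) * x"
    using assms by (metis mult_right_mono order.trans zero_le_one)+
qed

text \<open>Only pairs of positions in \<open>{lo..hi}\<close> meeting \<open>B\<close> can change their relative order.\<close>

lemma inversions_comp_permutes_le:
  assumes tau: "tau permutes B" and B: "B \<subseteq> {lo..hi}" "B \<subseteq> {1..n}"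
  shows "inversions n (p \<circ> tau) \<le> inversions n p + 2 * card B * (hi + 1 - lo)"
proof -
  define Inv where
    "Inv f = {(i, j). i \<in> {1..n} \<and> j \<in> {1..n} \<and> i < j \<and> f i > f j}" for f :: "nat \<Rightarrow> nat"
  define X where "X = {(i, j). i < j \<and> (i \<in> B \<or> j \<in> B) \<and> lo \<le> i \<and> j \<le> hi}"
  have tau_in: "tau x \<in> B \<longleftrightarrow> x \<in> B" for x using tau by (simp add: permutes_in_image)
  have tau_out: "x \<notin> B \<Longrightarrow> tau x = x" for x using tau by (simp add: permutes_not_in)
  have finite_Inv: "finite (Inv f)" for f
    unfolding Inv_def by (rule finite_subset[of _ "{1..n} \<times> {1..n}"]) auto
  have finB: "finite B" using B(2) finite_subset by blast
  have X_sub: "X \<subseteq> B \<times> {lo..hi} \<union> {lo..hi} \<times> B" unfolding X_def using B by auto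
  have "card X \<le> card (B \<times> {lo..hi}) + card ({lo..hi} \<times> B)"
    using card_mono[OF _ X_sub] card_Un_le finB by (meson finite_SigmaI finite_Un finite_atLeastAtMost le_trans)
  also have "\<dots> = 2 * card B * (hi + 1 - lo)" by (simp add: card_cartesian_product)
  finally have card_X: "card X \<le> 2 * card B * (hi + 1 - lo)" .
  have maps_to: "(\<lambda>(i, j). (tau i, tau j)) ` (Inv (p \<circ> tau) - X) \<subseteq> Inv p"
  proof clarify
    fix i j assume "(i, j) \<in> Inv (p \<circ> tau)" "(i, j) \<notin> X"
    then have ij: "i \<in> {1..n}" "j \<in> {1..n}" "i < j" "p (tau i) > p (tau j)"
      and not_X: "\<not> ((i \<in> B \<or> j \<in> B) \<and> lo \<le> i \<and> j \<le> hi)"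
      unfolding Inv_def X_def by auto
    have "tau i < tau j"
    proof (cases "i \<in> B"; cases "j \<in> B")
      assume "i \<in> B" "j \<notin> B"
      then show ?thesis using ij not_X tau_out[of j] tau_in[of i] B(1) by force
    next
      assume "i \<notin> B" "j \<in> B"
      then show ?thesis using ij not_X tau_out[of i] tau_in[of j] B(1) by force
    qed (use ij not_X B(1) tau_out in auto)
    moreover have "tau i \<in> {1..n}" "tau j \<in> {1..n}"
      using ij tau_in tau_out B(2) by (metis subsetD)+
    ultimately show "(tau i, tau j) \<in> Inv p" using ij unfolding Inv_def by auto
  qed
  have "inj_on (\<lambda>(i, j). (tau i, tau j)) (Inv (p \<circ> tau) - X)"
    using permutes_inj[OF tau] by (auto simp: inj_on_def inj_def)
  then have "card (Inv (p \<circ> tau) - X) \<le> card (Inv p)"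
    using card_inj_on_le[OF _ maps_to] finite_Inv by blast
  moreover have "card (Inv (p \<circ> tau)) \<le> card ((Inv (p \<circ> tau) - X) \<union> X)"
    using finite_Inv finite_subset[OF X_sub] finB by (intro card_mono) auto
  moreover note card_Un_le[of "Inv (p \<circ> tau) - X" X]
  ultimately have "card (Inv (p \<circ> tau)) \<le> card (Inv p) + 2 * card B * (hi + 1 - lo)"
    using card_X by linarith
  then show ?thesis unfolding inversions_def Inv_def by simp
qed

lemma LIS_le: "LIS n p \<le> n"
  unfolding LIS_def
  by (rule Max.boundedI) (auto intro: finite_subset[of _ "Pow {1..n}"] dest: card_mono[rotated])

lemma obtain_strict_mono_on_if_LIS_ge:
  assumes "L \<le> LIS n p"
  obtains S where "S \<subseteq> {1..n}" "card S = L" "strict_mono_on S p"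
proof -
  define F where "F = {S. S \<subseteq> {1..n} \<and> (\<forall>i\<in>S. \<forall>j\<in>S. i < j \<longrightarrow> p i < p j)}"
  have "finite F" unfolding F_def by (rule finite_subset[of _ "Pow {1..n}"]) auto
  moreover have "{} \<in> F" unfolding F_def by auto
  ultimately have "LIS n p \<in> card ` F" unfolding LIS_def F_def[symmetric] by (intro Max_in) auto
  then obtain S where S: "S \<in> F" "L \<le> card S" using assms by auto
  obtain T where "T \<subseteq> S" "card T = L" using obtain_subset_with_card_n[OF S(2)] by blast
  show ?thesis
  proof (rule that)
    show "T \<subseteq> {1..n}" and "strict_mono_on T p"
      using \<open>T \<subseteq> S\<close> S(1) unfolding F_def by (auto simp: strict_mono_on_def)
  qed fact
qed

definition mallows_weight :: "nat \<Rightarrow> real \<Rightarrow> (nat \<Rightarrow> nat) set \<Rightarrow> real" where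
  "mallows_weight n q A = (\<Sum>p\<in>A. q ^ inversions n p)"

lemma finite_perms: "finite (perms n)"
  unfolding perms_def by (rule finite_permutations) simp

lemma mallows_weight_nonneg: "0 < q \<Longrightarrow> 0 \<le> mallows_weight n q A"
  unfolding mallows_weight_def by (intro sum_nonneg) simp

lemma mallows_weight_mono:
  "0 < q \<Longrightarrow> A \<subseteq> A' \<Longrightarrow> A' \<subseteq> perms n \<Longrightarrow> mallows_weight n q A \<le> mallows_weight n q A'"
  unfolding mallows_weight_def using finite_perms by (intro sum_mono2) (auto intro: finite_subset)

lemma mallows_weight_perms_pos: "0 < q \<Longrightarrow> 0 < mallows_weight n q (perms n)"
  unfolding mallows_weight_def using finite_perms
  by (intro sum_pos) (auto simp: perms_def intro: permutes_id)

lemma mallows_weight_block_shuffle_le: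
  assumes B: "B \<subseteq> {lo..hi}" "B \<subseteq> {1..n}"
    and A: "A \<subseteq> perms n" "\<And>p. p \<in> A \<Longrightarrow> strict_mono_on B p"
    and A': "A' \<subseteq> perms n" "\<And>p t. p \<in> A \<Longrightarrow> t permutes B \<Longrightarrow> p \<circ> t \<in> A'"
    and q: "0 < q" "q \<le> 1"
  shows "mallows_weight n q A * fact (card B) * q ^ (2 * card B * (hi + 1 - lo))
    \<le> mallows_weight n q A'"
proof -
  define T where "T = {t. t permutes B}"
  define K where "K = 2 * card B * (hi + 1 - lo)"
  have finB: "finite B" using B(2) finite_subset by blast
  have "mallows_weight n q A * fact (card B) * q ^ K = (\<Sum>p\<in>A. \<Sum>t\<in>T. q ^ (inversions n p + K))"
    unfolding mallows_weight_def T_def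
    by (simp add: card_permutations finB sum_distrib_left sum_distrib_right power_add mult_ac)
  also have "\<dots> \<le> (\<Sum>(p, t)\<in>A \<times> T. q ^ inversions n (p \<circ> t))"
    unfolding sum.cartesian_product[symmetric]
    using inversions_comp_permutes_le B q by (intro sum_mono power_decreasing) (auto simp: T_def K_def)
  also have "\<dots> = (\<Sum>r\<in>(\<lambda>(p, t). p \<circ> t) ` (A \<times> T). q ^ inversions n r)"
  proof -
    have "inj_on (\<lambda>(p, t). p \<circ> t) (A \<times> T)"
      using A inj_on_comp_permutes[of B] unfolding T_def perms_def
      by (rule_tac inj_on_subset) (auto dest: permutes_inj)
    then show ?thesis by (simp add: sum.reindex case_prod_unfold comp_def)
  qed
  also have "\<dots> \<le> mallows_weight n q A'"
    unfolding mallows_weight_def using A' finite_perms q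
    by (intro sum_mono2) (auto simp: T_def intro: finite_subset)
  finally show ?thesis unfolding K_def .
qed

lemma mallows_weight_single_block_le:
  assumes S: "S \<subseteq> {a..n}" "1 \<le> a" and m: "m \<le> card S" "card S < 2 * m"
    and q: "0 < q" "q \<le> 1"
  shows "mallows_weight n q {p\<in>perms n. strict_mono_on S p}
      * (real m / exp 1) ^ card S * q ^ (4 * m * (n + 1 - a))
    \<le> mallows_weight n q (perms n)"
proof -
  let ?A = "{p\<in>perms n. strict_mono_on S p}"
  have "(real m / exp 1) ^ card S \<le> fact (card S)"
    using m(1) by (rule pow_div_exp_le_fact)
  moreover have "q ^ (4 * m * (n + 1 - a)) \<le> q ^ (2 * card S * (n + 1 - a))"
    using q m by (intro power_decreasing) auto
  ultimately have "mallows_weight n q ?A * (real m / exp 1) ^ card S * q ^ (4 * m * (n + 1 - a))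
      \<le> mallows_weight n q ?A * fact (card S) * q ^ (2 * card S * (n + 1 - a))"
    using mallows_weight_nonneg q by (intro mult_mono mult_left_mono) auto
  also have "\<dots> \<le> mallows_weight n q (perms n)"
  proof (rule mallows_weight_block_shuffle_le)
    show "S \<subseteq> {1..n}" using S by auto
    then show "p \<circ> t \<in> perms n" if "p \<in> ?A" "t permutes S" for p t
      using that unfolding perms_def by (auto intro: permutes_compose permutes_subset)
  qed (use S q in auto)
  finally show ?thesis .
qed

lemma mallows_weight_peel_block_le:
  assumes Y: "Y \<subseteq> {a..hi}" "1 \<le> a" "hi \<le> n" and "Y \<inter> Z = {}"
    and q: "0 < q" "q \<le> 1"
  shows "mallows_weight n q {p\<in>perms n. strict_mono_on (Y \<union> Z) p}
      * fact (card Y) * q ^ (2 * card Y * (hi + 1 - a))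
    \<le> mallows_weight n q {p\<in>perms n. strict_mono_on Z p}"
proof -
  define A where "A = {p\<in>perms n. strict_mono_on Y p \<and> strict_mono_on Z p}"
  have "mallows_weight n q {p\<in>perms n. strict_mono_on (Y \<union> Z) p} \<le> mallows_weight n q A"
    using q by (intro mallows_weight_mono) (auto simp: A_def strict_mono_on_def)
  then have "mallows_weight n q {p\<in>perms n. strict_mono_on (Y \<union> Z) p}
      * fact (card Y) * q ^ (2 * card Y * (hi + 1 - a))
    \<le> mallows_weight n q A * fact (card Y) * q ^ (2 * card Y * (hi + 1 - a))"
    using q by (intro mult_right_mono) auto
  also have "mallows_weight n q A * fact (card Y) * q ^ (2 * card Y * (hi + 1 - a))
      \<le> mallows_weight n q {p\<in>perms n. strict_mono_on Z p}"
  proof (rule mallows_weight_block_shuffle_le[OF Y(1)])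
    fix p t assume "p \<in> A" and t: "t permutes Y"
    have "t permutes {1..n}" using t Y by (rule_tac permutes_subset) auto
    moreover have "t z = z" if "z \<in> Z" for z
      using t \<open>Y \<inter> Z = {}\<close> that by (meson disjoint_iff permutes_not_in)
    ultimately show "p \<circ> t \<in> {p\<in>perms n. strict_mono_on Z p}"
      using \<open>p \<in> A\<close> unfolding A_def perms_def
      by (auto intro: permutes_compose simp: strict_mono_on_def)
  qed (use Y q in \<open>auto simp: A_def\<close>)
  finally show ?thesis .
qed

lemma mallows_weight_strict_mono_on_union_le:
  assumes Y: "Y \<subseteq> {a..hi}" "1 \<le> a" "a \<le> hi" "hi \<le> n" "Y \<inter> Z = {}" "card Y = m"
    and q: "0 < q" "q \<le> 1"
    and tail: "mallows_weight n q {p\<in>perms n. strict_mono_on Z p}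
      * (real m / exp 1) ^ k * q ^ (4 * m * (n - hi)) \<le> mallows_weight n q (perms n)"
  shows "mallows_weight n q {p\<in>perms n. strict_mono_on (Y \<union> Z) p}
      * (real m / exp 1) ^ (m + k) * q ^ (4 * m * (n + 1 - a)) \<le> mallows_weight n q (perms n)"
proof -
  let ?W = "\<lambda>B. mallows_weight n q {p\<in>perms n. strict_mono_on B p}"
  define r where "r = real m / exp 1"
  have "r ^ (m + k) \<le> fact m * r ^ k"
    unfolding power_add using pow_div_exp_le_fact[of m m] by (simp add: mult_right_mono r_def)
  moreover have "q ^ (4 * m * (n + 1 - a)) \<le> q ^ (2 * m * (hi + 1 - a)) * q ^ (4 * m * (n - hi))"
  proof -
    have "2 * m * (hi + 1 - a) + 4 * m * (n - hi) \<le> 4 * m * ((hi + 1 - a) + (n - hi))"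
      by (simp add: add_mult_distrib2)
    also have "(hi + 1 - a) + (n - hi) = n + 1 - a" using Y by simp
    finally show ?thesis unfolding power_add[symmetric] using q by (intro power_decreasing) auto
  qed
  ultimately have "?W (Y \<union> Z) * r ^ (m + k) * q ^ (4 * m * (n + 1 - a))
      \<le> ?W (Y \<union> Z) * (fact m * r ^ k) * (q ^ (2 * m * (hi + 1 - a)) * q ^ (4 * m * (n - hi)))"
    using mallows_weight_nonneg[OF q(1)] q unfolding r_def by (intro mult_mono) auto
  also have "\<dots> = (?W (Y \<union> Z) * fact m * q ^ (2 * m * (hi + 1 - a))) * (r ^ k * q ^ (4 * m * (n - hi)))"
    by (simp only: mult_ac)
  also have "\<dots> \<le> ?W Z * (r ^ k * q ^ (4 * m * (n - hi)))"
    using mallows_weight_peel_block_le[of Y a hi n Z q] Y q unfolding r_def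
    by (intro mult_right_mono) auto
  also have "\<dots> \<le> mallows_weight n q (perms n)"
    using tail unfolding r_def by (simp add: mult.assoc)
  finally show ?thesis unfolding r_def .
qed

text \<open>
  The list \<open>xs\<close> is cut into blocks of \<open>m\<close> elements from the left; the remaining tail of
  fewer than \<open>2m\<close> elements is the last block, spanning \<open>{a..n}\<close>.
\<close>

lemma mallows_weight_strict_mono_on_list_le:
  assumes "sorted_wrt (<) xs" "set xs \<subseteq> {a..n}" "1 \<le> a" "1 \<le> m" "m \<le> length xs"
    and q: "0 < q" "q \<le> 1"
  shows "mallows_weight n q {p\<in>perms n. strict_mono_on (set xs) p}
      * (real m / exp 1) ^ length xs * q ^ (4 * m * (n + 1 - a))
    \<le> mallows_weight n q (perms n)"
  using assms(1-5)
proof (induction "length xs" arbitrary: xs a rule: less_induct)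
  case less
  have dist: "distinct xs" using less.prems(1) by (simp add: strict_sorted_iff)
  show ?case
  proof (cases "length xs < 2 * m")
    case True
    then show ?thesis
      using mallows_weight_single_block_le[of "set xs" a n m q] less.prems q dist
      by (simp add: distinct_card)
  next
    case False
    define ys zs where "ys = take m xs" and "zs = drop m xs"
    have xs: "xs = ys @ zs" unfolding ys_def zs_def by simp
    have sorted_zs: "sorted_wrt (<) zs" and ys_zs: "\<forall>y\<in>set ys. \<forall>z\<in>set zs. y < z"
      using less.prems(1) unfolding xs sorted_wrt_append by auto
    have card_ys: "card (set ys) = m" and length_xs: "length xs = m + length zs"
      using less.prems(5) dist unfolding ys_def zs_def by (auto simp: distinct_card)
    define hi where "hi = Max (set ys)"
    have hi: "hi \<in> set ys" unfolding hi_def using card_ys less.prems(4) by (intro Max_in) auto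
    have ys_sub: "set ys \<subseteq> {a..hi}" using less.prems(2) xs unfolding hi_def by auto
    have zs_sub: "set zs \<subseteq> {hi + 1..n}" using less.prems(2) xs hi ys_zs by fastforce
    have "a \<le> hi" "hi \<le> n" using less.prems(2) xs hi ys_sub by auto
    have disjoint: "set ys \<inter> set zs = {}" using ys_zs by fastforce
    have tail: "mallows_weight n q {p\<in>perms n. strict_mono_on (set zs) p}
        * (real m / exp 1) ^ length zs * q ^ (4 * m * (n - hi)) \<le> mallows_weight n q (perms n)"
      using less.hyps[of zs "hi + 1"] length_xs False less.prems(4) sorted_zs zs_sub by simp
    have "set xs = set ys \<union> set zs" unfolding xs by simp
    with mallows_weight_strict_mono_on_union_le[OF ys_sub less.prems(3) \<open>a \<le> hi\<close> \<open>hi \<le> n\<close>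
        disjoint card_ys q tail]
    show ?thesis unfolding length_xs by simp
  qed
qed

lemma mallows_weight_strict_mono_on_le:
  assumes "S \<subseteq> {1..n}" "1 \<le> m" "m \<le> card S" "0 < q" "q \<le> 1"
  shows "mallows_weight n q {p\<in>perms n. strict_mono_on S p} * (real m / exp 1) ^ card S * q ^ (4 * m * n)
    \<le> mallows_weight n q (perms n)"
proof -
  have "finite S" using assms(1) finite_subset by blast
  then have "set (sorted_list_of_set S) = S" "length (sorted_list_of_set S) = card S" by simp_all
  then show ?thesis
    using mallows_weight_strict_mono_on_list_le[of "sorted_list_of_set S" 1 n m q] assms by simp
qed

lemma mallows_prob_LIS_ge_le:
  assumes "1 \<le> m" "m \<le> L" "0 < q" "q \<le> 1"
  shows "mallows_prob n q (\<lambda>p. L \<le> LIS n p)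
    \<le> real (n choose L) / ((real m / exp 1) ^ L * q ^ (4 * m * n))"
proof -
  define Fam where "Fam = {S. S \<subseteq> {1..n} \<and> card S = L}"
  define c where "c = (real m / exp 1) ^ L * q ^ (4 * m * n)"
  let ?W = "mallows_weight n q"
  let ?S = "\<lambda>S. {p\<in>perms n. strict_mono_on S p}"
  have "0 < c" unfolding c_def using assms by simp
  have finite_Fam: "finite Fam" unfolding Fam_def by (rule finite_subset[of _ "Pow {1..n}"]) auto
  have S_le: "?W (?S S) \<le> ?W (perms n) / c" if "S \<in> Fam" for S
  proof -
    have "?W (?S S) * c \<le> ?W (perms n)"
      using mallows_weight_strict_mono_on_le[of S n m q] that assms
      unfolding Fam_def c_def by (simp add: mult.assoc)
    then show ?thesis using \<open>0 < c\<close> by (simp add: pos_le_divide_eq)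
  qed
  have "{p\<in>perms n. L \<le> LIS n p} \<subseteq> (\<Union>S\<in>Fam. ?S S)"
    unfolding Fam_def by (blast elim: obtain_strict_mono_on_if_LIS_ge)
  then have "?W {p\<in>perms n. L \<le> LIS n p} \<le> ?W (\<Union>S\<in>Fam. ?S S)"
    using assms by (intro mallows_weight_mono) auto
  also have "\<dots> \<le> (\<Sum>S\<in>Fam. ?W (?S S))"
    unfolding mallows_weight_def using assms finite_Fam finite_perms
    by (intro sum_UN_le) (auto intro: finite_subset)
  also have "\<dots> \<le> (\<Sum>S\<in>Fam. ?W (perms n) / c)"
    using S_le by (rule sum_mono)
  also have "\<dots> = real (n choose L) * (?W (perms n) / c)"
    by (simp add: Fam_def n_subsets)
  finally have "?W {p\<in>perms n. L \<le> LIS n p} / ?W (perms n) \<le> real (n choose L) / c"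
    using mallows_weight_perms_pos[OF \<open>0 < q\<close>, of n] by (simp add: divide_le_eq)
  then show ?thesis
    unfolding mallows_prob_def mallows_Z_def mallows_weight_def[symmetric] c_def .
qed

lemma mallows_prob_LIS_ge_eq_0:
  assumes "n < L"
  shows "mallows_prob n q (\<lambda>p. L \<le> LIS n p) = 0"
proof -
  have "\<not> L \<le> LIS n p" for p using LIS_le[of n p] assms by linarith
  then show ?thesis unfolding mallows_prob_def by simp
qed

text \<open>The block size \<open>m \<approx> L / ((1 - q) n)\<close> balances \<open>(e/m)\<^sup>L\<close> against \<open>q^(-4mn) \<le> e^(8L)\<close>.\<close>

lemma mallows_prob_LIS_ge_le_power:
  assumes q: "0 < 1 - q" "1 - q \<le> 1/2" and n: "1 \<le> (1 - q) * real n" "(1 - q) * real n \<le> real L"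
  shows "mallows_prob n q (\<lambda>p. L \<le> LIS n p) \<le> (2 * exp 10 * (1 - q) * (real n)\<^sup>2 / (real L)\<^sup>2) ^ L"
proof -
  define x where "x = 1 - q"
  obtain m where m: "1 \<le> m" "m \<le> L" "real m * (x * real n) \<le> real L" "real L \<le> 2 * real m * (x * real n)"
    using obtain_block_size n unfolding x_def by blast
  have "0 < q" "0 < real L" "0 < x" using q n m unfolding x_def by auto
  have "exp (-2 * x) \<le> q" using exp_neg_two_mult_le[of x] q unfolding x_def by simp
  then have "exp (-2 * x) ^ (4 * m * n) \<le> q ^ (4 * m * n)" by (intro power_mono) auto
  moreover have "exp (-2 * x) ^ (4 * m * n) = exp (- 8 * (real m * (x * real n)))"
    by (simp add: exp_of_nat_mult[symmetric] algebra_simps)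
  moreover have "exp (- 8 * real L) \<le> exp (- 8 * (real m * (x * real n)))" using m(3) by simp
  ultimately have "exp (- 8 * real L) \<le> q ^ (4 * m * n)" by linarith
  then have q_pow: "1 / q ^ (4 * m * n) \<le> exp 8 ^ L"
    using \<open>0 < q\<close> by (simp add: divide_le_eq exp_minus exp_of_nat_mult[symmetric] field_simps)
  have "exp 1 / real m \<le> 2 * exp 1 * x * real n / real L"
    using m(1,4) \<open>0 < real L\<close> by (simp add: field_simps)
  then have m_pow: "(exp 1 / real m) ^ L \<le> (2 * exp 1 * x * real n / real L) ^ L"
    by (intro power_mono) auto
  have "mallows_prob n q (\<lambda>p. L \<le> LIS n p)
      \<le> real (n choose L) / ((real m / exp 1) ^ L * q ^ (4 * m * n))"
    using mallows_prob_LIS_ge_le[OF m(1,2) \<open>0 < q\<close>] q by simp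
  also have "\<dots> = real (n choose L) * (exp 1 / real m) ^ L * (1 / q ^ (4 * m * n))"
    by (simp add: power_divide)
  also have "\<dots> \<le> (exp 1 * real n / real L) ^ L * (2 * exp 1 * x * real n / real L) ^ L * exp 8 ^ L"
    using binomial_le_exp_pow m_pow q_pow \<open>0 < q\<close> \<open>0 < x\<close> by (intro mult_mono) auto
  also have "\<dots> = ((exp 1 * real n / real L) * (2 * exp 1 * x * real n / real L) * exp 8) ^ L"
    by (simp only: power_mult_distrib)
  also have "(exp 1 * real n / real L) * (2 * exp 1 * x * real n / real L) * exp 8
      = 2 * (exp 1 * exp 1 * exp 8) * x * (real n)\<^sup>2 / (real L)\<^sup>2"
    by (simp add: power2_eq_square)
  also have "exp 1 * exp 1 * exp 8 = (exp 10 :: real)"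
    by (simp flip: exp_add)
  finally show ?thesis unfolding x_def .
qed

lemma mallows_prob_LIS_ge_le_const:
  fixes C q :: real
  assumes C: "2 * exp 10 \<le> C" and q: "0 < 1 - q" "1 \<le> (1 - q) * real n"
    and L: "C * real n * sqrt (1 - q) \<le> real L" "L \<le> n"
  shows "mallows_prob n q (\<lambda>p. L \<le> LIS n p) \<le> (C * (1 - q) * (real n)\<^sup>2 / (real L)\<^sup>2) ^ L"
proof -
  define s where "s = sqrt (1 - q)"
  have "0 \<le> s" and x: "1 - q = s\<^sup>2" unfolding s_def using q by auto
  have "2 \<le> C" using C by (smt (verit) one_le_exp_iff)
  have "(C * s) * real n \<le> 1 * real n"
    using L unfolding s_def by (simp add: mult_ac)
  moreover have "0 < real n" using q(2) by (cases "n = 0") auto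
  ultimately have "C * s \<le> 1" by (simp add: mult_le_cancel_right1)
  moreover have "2 * s \<le> C * s" using \<open>2 \<le> C\<close> \<open>0 \<le> s\<close> by (rule mult_right_mono)
  ultimately have "s \<le> 1/2" by linarith
  then have "s\<^sup>2 \<le> s" using \<open>0 \<le> s\<close> mult_left_mono[of s 1 s] by (simp add: power2_eq_square)
  then have "1 - q \<le> 1/2" and "1 - q \<le> C * s"
    using \<open>s \<le> 1/2\<close> \<open>2 * s \<le> C * s\<close> \<open>0 \<le> s\<close> unfolding x by linarith+
  have "(1 - q) * real n \<le> (C * s) * real n"
    using \<open>1 - q \<le> C * s\<close> by (rule mult_right_mono) simp
  also have "\<dots> \<le> real L" using L unfolding s_def by (simp add: mult_ac)
  finally have "mallows_prob n q (\<lambda>p. L \<le> LIS n p)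
      \<le> (2 * exp 10 * (1 - q) * (real n)\<^sup>2 / (real L)\<^sup>2) ^ L"
    using q \<open>1 - q \<le> 1/2\<close> by (intro mallows_prob_LIS_ge_le_power)
  also have "\<dots> \<le> (C * (1 - q) * (real n)\<^sup>2 / (real L)\<^sup>2) ^ L"
    using C q by (intro power_mono divide_right_mono mult_right_mono) auto
  finally show ?thesis .
qed

theorem proposition4p2:
  "\<exists>C::real. C > 0 \<and>
     (\<forall>n::nat. \<forall>q::real. \<forall>L::nat.
        n \<ge> 1 \<longrightarrow> 0 < q \<longrightarrow> q \<le> 1 - 2 / real n \<longrightarrow>
        real L \<ge> C * real n * sqrt (1 - q) \<longrightarrow>
        mallows_prob n q (\<lambda>p. LIS n p \<ge> L)
          \<le> (C * (1 - q) * (real n)^2 / (real L)^2) ^ L)"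
proof (intro exI[of _ 120000] conjI allI impI)
  fix n L :: nat and q :: real
  assume "n \<ge> 1" "0 < q" "q \<le> 1 - 2 / real n"
    and L: "120000 * real n * sqrt (1 - q) \<le> real L"
  then have xn: "1 \<le> (1 - q) * real n" by (simp add: field_simps)
  then have "0 < 1 - q"
    by (metis mult_nonpos_nonneg of_nat_0_le_iff not_less order.trans not_one_le_zero)
  have "exp (10::real) = exp 1 ^ 10" by (simp flip: exp_of_nat_mult)
  also have "\<dots> \<le> 3 ^ 10" by (intro power_mono exp_le) auto
  finally have "2 * exp 10 \<le> (120000::real)" by simp
  show "mallows_prob n q (\<lambda>p. L \<le> LIS n p) \<le> (120000 * (1 - q) * (real n)\<^sup>2 / (real L)\<^sup>2) ^ L"
  proof (cases "L \<le> n")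
    case True
    then show ?thesis using mallows_prob_LIS_ge_le_const \<open>2 * exp 10 \<le> 120000\<close> \<open>0 < 1 - q\<close> xn L
      by blast
  next
    case False
    then show ?thesis using mallows_prob_LIS_ge_eq_0 \<open>0 < 1 - q\<close> by simp
  qed
qed simp

end
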